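(* Let $J\in\mathbb{R}^{m\times n}$ have full column rank, let $H\in\mathbb{R}^{m\times m}$ be symmetric positive definite, $q\in\mathbb{R}^m$, $c\in\mathbb{R}$, and consider minimizing $L(\theta)=\mathcal{L}(J\theta)$ with $\mathcal{L}(v)=\tfrac12 v^\top Hv+v^\top q+c$. Assume strong consistency: (1) there is $\theta^*$ with $J\theta^*=\arg\min_v\mathcal{L}(v)$, and (2) $\mathrm{range}(HJ)\subseteq\mathrm{range}(J)$. Consider SNGD $$\theta_{t+1}=\theta_t-\eta\,J_S^{+(\lambda)}(H_SJ\theta_t+q_S)$$ with batch size $k$ and regularization $\lambda\ge 0$, where at each iteration $S\subseteq\{1,\dots,m\}$, $|S|=k$, is drawn uniformly without replacement, independently across iterations. Let $P(S)=J_S^{+(\lambda)}J_S$, $\overline{P}=\mathbb{E}_S[P(S)]$, $\alpha=\lambda_{\min}(\overline{P})$, and assume $\overline{P}$ is nonsingular and shares an eigenbasis with $J^\top J$. Define the positive definite matrix $\overline{Q}=(J^\top J)^{-1/2}\overline{P}(J^\top J)^{-1/2}$, the matrix $\tilde H=(J^\top J)^{-1/2}J^\top HJ(J^\top J)^{-1/2}$, and $$\gamma=1\Big/\lambda_{\max}\Big(\mathbb{E}_S\big[(J^\top J)^{-1/2}P(S)\overline{Q}^{-1}P(S)(J^\top J)^{-1/2}\big]\Big).$$ Then $\gamma\ge\kappa^{-1}(\overline{Q})$, and with step size $\eta=\gamma/\lambda_{\max}(\tilde H)$ the SNGD iterates satisfy $$\mathbb{E}\,\|\theta_t-\theta^*\|^2_{\overline{Q}^{-1}}\le\big(1-\kappa^{-1}(\tilde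 H)\cdot\alpha\cdot\gamma\big)^t\,\|\theta_0-\theta^*\|^2_{\overline{Q}^{-1}} .$$
   Context: $J_S$, $H_S$ denote rows of $J$, $H$ indexed by $S$; $q_S$ the corresponding entries of $q$. $J_S^{+(\lambda)}=(J_S^\top J_S+\lambda I)^{-1}J_S^\top=J_S^\top(J_SJ_S^\top+\lambda I)^{-1}$ (Moore–Penrose pseudoinverse when $\lambda=0$). $\kappa(A)$ denotes the condition number $\lambda_{\max}(A)/\lambda_{\min}(A)$ of a symmetric positive definite matrix, and $\|x\|_A^2=x^\top Ax$. *)

theory Defs
  imports "HOL-Analysis.Analysis"
begin

(* Matrices are HOL-Analysis Cartesian matrices: real^'n^'m is an m x n matrix
   (rows indexed by 'm, columns by 'n). *)

definition sym_mat :: "real^'n^'n \<Rightarrow> bool" where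
  "sym_mat A \<longleftrightarrow> transpose A = A"

definition posdef :: "real^'n^'n \<Rightarrow> bool" where
  "posdef A \<longleftrightarrow> sym_mat A \<and> (\<forall>x. x \<noteq> 0 \<longrightarrow> x \<bullet> (A *v x) > 0)"

definition eigenvalues :: "real^'n^'n \<Rightarrow> real set" where
  "eigenvalues A = {\<mu>. \<exists>v. v \<noteq> 0 \<and> A *v v = \<mu> *\<^sub>R v}"

definition lambda_max :: "real^'n^'n \<Rightarrow> real" where
  "lambda_max A = Max (eigenvalues A)"

definition lambda_min :: "real^'n^'n \<Rightarrow> real" where
  "lambda_min A = Min (eigenvalues A)"

definition kappa :: "real^'n^'n \<Rightarrow> real" where
  "kappa A = lambda_max A / lambda_min A"

definition sqnorm_in :: "real^'n^'n \<Rightarrow> real^'n \<Rightarrow> real" where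
  "sqnorm_in A x = x \<bullet> (A *v x)"

definition msqrt :: "real^'n^'n \<Rightarrow> real^'n^'n" where
  "msqrt A = (THE R. posdef R \<and> R ** R = A)"

definition pinv :: "real^'n^'m \<Rightarrow> real^'m^'n" where
  "pinv A = (THE X. A ** X ** A = A \<and> X ** A ** X = X \<and>
                    transpose (A ** X) = A ** X \<and> transpose (X ** A) = X ** A)"

definition rpinv :: "real \<Rightarrow> real^'n^'m \<Rightarrow> real^'m^'n" where
  "rpinv lam A = (if lam = 0 then pinv A
                  else matrix_inv (transpose A ** A + lam *\<^sub>R mat 1) ** transpose A)"

(* diagonal 0/1 row selector for the index set S; rowsel S ** J is J_S padded by zero rows *)
definition rowsel :: "'m set \<Rightarrow> real^'m^'m" where
  "rowsel S = (\<chi> i j. if i = j \<and> i \<in> S then 1 else 0)"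

(* J_S^{+(lambda)} realised on the zero-padded m-dimensional representation *)
definition JS_rpinv :: "real \<Rightarrow> real^'n^'m \<Rightarrow> 'm set \<Rightarrow> real^'m^'n" where
  "JS_rpinv lam J S = rpinv lam (rowsel S ** J)"

definition projP :: "real \<Rightarrow> real^'n^'m \<Rightarrow> 'm set \<Rightarrow> real^'n^'n" where
  "projP lam J S = JS_rpinv lam J S ** (rowsel S ** J)"

definition batches :: "nat \<Rightarrow> 'm::finite set set" where
  "batches k = {S. card S = k}"

definition ES :: "nat \<Rightarrow> ('m::finite set \<Rightarrow> 'a::real_vector) \<Rightarrow> 'a" where
  "ES k f = (1 / real (card (batches k :: 'm set set))) *\<^sub>R (\<Sum>S\<in>batches k. f S)"

definition sngd_step :: "real \<Rightarrow> real \<Rightarrow> real^'n^'m \<Rightarrow> real^'m^'m \<Rightarrow> real^'m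
                          \<Rightarrow> 'm set \<Rightarrow> real^'n \<Rightarrow> real^'n" where
  "sngd_step eta lam J H q S th =
     th - eta *\<^sub>R (JS_rpinv lam J S *v (rowsel S *v (H *v (J *v th) + q)))"

fun sngd_iter :: "real \<Rightarrow> real \<Rightarrow> real^'n^'m \<Rightarrow> real^'m^'m \<Rightarrow> real^'m
                   \<Rightarrow> 'm set list \<Rightarrow> real^'n \<Rightarrow> real^'n" where
  "sngd_iter eta lam J H q [] th = th"
| "sngd_iter eta lam J H q (S # Ss) th = sngd_iter eta lam J H q Ss (sngd_step eta lam J H q S th)"

(* expectation over t i.i.d. uniform batches of size k: average over all length-t batch sequences *)
definition E_seq :: "nat \<Rightarrow> nat \<Rightarrow> ('m::finite set list \<Rightarrow> real) \<Rightarrow> real" where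
  "E_seq k t f = (\<Sum>Ss\<in>{Ss. length Ss = t \<and> set Ss \<subseteq> batches k}. f Ss)
                   / real (card (batches k :: 'm set set)) ^ t"

definition quadloss :: "real^'m^'m \<Rightarrow> real^'m \<Rightarrow> real \<Rightarrow> real^'m \<Rightarrow> real" where
  "quadloss H q c v = (1/2) * (v \<bullet> (H *v v)) + v \<bullet> q + c"

definition share_eigenbasis :: "real^'n^'n \<Rightarrow> real^'n^'n \<Rightarrow> bool" where
  "share_eigenbasis A B \<longleftrightarrow> (\<exists>Bs. independent Bs \<and> span Bs = UNIV \<and>
      (\<forall>v\<in>Bs. (\<exists>\<mu>. A *v v = \<mu> *\<^sub>R v) \<and> (\<exists>\<mu>. B *v v = \<mu> *\<^sub>R v)))"

end

theory Submission
  imports Defs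
begin

(* Write e = theta - theta* and u = (J^T J)^(1/2) e. Optimality of J theta* gives
   H J theta* + q = 0, and range(H J) <= range(J) gives M with J M = H J, so one SNGD step maps
   e to e - eta P(S) M e. Because Pbar commutes with (J^T J)^(1/2), one has Qbar^-1 Pbar = J^T J,
   and averaging over S turns the squared Qbar^-1-norm of the new error into
   |e|^2 - 2 eta u^T Ht u + eta^2 (Ht u)^T X (Ht u) (with |.| that norm), where X is the matrix whose top eigenvalue
   defines gamma. With eta = gamma / lambda_max(Ht) the last term is at most eta u^T Ht u, and
   u^T Ht u >= lambda_min(Ht) alpha |e|^2; this is the one-step contraction, iterated over the
   independent batches. Each P(S) is symmetric with P(S)^2 <= P(S), which bounds X by kappa(Qbar)
   and hence gamma from below. The eigenvalue facts rest on a spectral theorem proved by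
   maximising the Rayleigh quotient on invariant subspaces. *)

lemma inner_matrix_vector_transpose:
  "x \<bullet> ((A::real^'n^'m) *v y) = (transpose A *v x) \<bullet> y"
  by (metis dot_lmul_matrix inner_commute transpose_matrix_vector)

lemma inner_congruence:
  "x \<bullet> ((transpose N ** A ** N) *v y) = ((N::real^'n^'m) *v x) \<bullet> (A *v (N *v y))"
proof -
  have "x \<bullet> ((transpose N ** A ** N) *v y) = x \<bullet> (transpose N *v (A *v (N *v y)))"
    by (simp only: matrix_vector_mul_assoc matrix_mul_assoc)
  also have "\<dots> = (transpose (transpose N) *v x) \<bullet> (A *v (N *v y))"
    by (rule inner_matrix_vector_transpose)
  finally show ?thesis by (simp only: transpose_transpose)
qed

lemma inner_gram_matrix:
  "x \<bullet> ((transpose A ** A) *v x) = ((A::real^'n^'m) *v x) \<bullet> (A *v x)"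
  using inner_congruence[of x A "mat 1" x] by simp

lemma sym_mat_inner: "sym_mat A \<Longrightarrow> x \<bullet> ((A::real^'n^'n) *v y) = (A *v x) \<bullet> y"
  by (metis inner_matrix_vector_transpose sym_mat_def)

lemma sym_matI_inner:
  assumes "\<And>x y. x \<bullet> ((A::real^'n^'n) *v y) = (A *v x) \<bullet> y"
  shows "sym_mat A"
proof -
  have "transpose A *v x = A *v x" for x
  proof -
    have "(transpose A *v x - A *v x) \<bullet> y = 0" for y
      using assms[of x y] inner_matrix_vector_transpose[of x A y] by (simp add: inner_diff_left)
    from this[of "transpose A *v x - A *v x"] show ?thesis by simp
  qed
  then show ?thesis unfolding sym_mat_def by (simp add: matrix_eq)
qed

lemma sym_mat_gram: "sym_mat (transpose A ** (A::real^'n^'m))"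
  unfolding sym_mat_def by (simp add: matrix_transpose_mul)

lemma sym_mat_congruence:
  "sym_mat A \<Longrightarrow> sym_mat (transpose M ** A ** (M::real^'n^'m))"
  unfolding sym_mat_def by (simp add: matrix_transpose_mul matrix_mul_assoc)

lemma matrix_inv_right: "invertible (A::real^'n^'n) \<Longrightarrow> A ** matrix_inv A = mat 1"
  unfolding invertible_def matrix_inv_def by (rule conjunct1[OF someI_ex])

lemma matrix_inv_left: "invertible (A::real^'n^'n) \<Longrightarrow> matrix_inv A ** A = mat 1"
  unfolding invertible_def matrix_inv_def by (rule conjunct2[OF someI_ex])

lemma matrix_inv_unique:
  assumes "(A::real^'n^'n) ** B = mat 1"
  shows "matrix_inv A = B"
proof -
  have "invertible A"
    using assms matrix_left_right_inverse invertible_def by blast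
  then have "matrix_inv A = matrix_inv A ** (A ** B)"
    by (simp add: assms)
  also have "\<dots> = B"
    by (metis matrix_mul_assoc matrix_inv_left \<open>invertible A\<close> matrix_mul_lid)
  finally show ?thesis .
qed

lemma invertible_matrix_inv: "invertible (A::real^'n^'n) \<Longrightarrow> invertible (matrix_inv A)"
  using matrix_inv_left matrix_inv_right invertible_def by blast

lemma invertible_if_inj: "inj ((*v) (A::real^'n^'n)) \<Longrightarrow> invertible A"
  using invertible_left_inverse matrix_left_invertible_injective by blast

lemma sym_mat_matrix_inv:
  assumes "sym_mat A" "invertible (A::real^'n^'n)"
  shows "sym_mat (matrix_inv A)"
proof -
  have "transpose (matrix_inv A) ** A = mat 1"
    using assms matrix_inv_right[OF assms(2)]
    by (metis matrix_transpose_mul sym_mat_def transpose_mat)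
  then have "matrix_inv A = transpose (matrix_inv A)"
    by (metis matrix_inv_unique matrix_left_right_inverse)
  then show ?thesis unfolding sym_mat_def by simp
qed

lemma quadratic_nonpos_imp_linear_coeff_zero:
  fixes a b :: real
  assumes "\<And>t. 2*t*a + t^2*b \<le> 0"
  shows "a = 0"
proof -
  define d where "d = \<bar>b\<bar> + 1"
  have "d > 0" "2*d + b > 0"
    unfolding d_def by (simp_all add: abs_if)
  have "d^2 * (2*(a/d)*a + (a/d)^2*b) = a^2 * (2*d + b)"
    using \<open>d > 0\<close> by (simp add: field_simps power2_eq_square)
  moreover have "d^2 * (2*(a/d)*a + (a/d)^2*b) \<le> 0"
    using assms[of "a/d"] by (simp add: mult_nonneg_nonpos)
  ultimately have "a^2 \<le> 0"
    using \<open>2*d + b > 0\<close> by (simp add: mult_le_0_iff)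
  then show ?thesis by simp
qed

section \<open>The spectral theorem\<close>

lemma rayleigh_maximizer_eigenvector:
  fixes A :: "real^'n^'n"
  assumes sym: "sym_mat A" and V: "subspace V" and inv: "\<And>x. x \<in> V \<Longrightarrow> A *v x \<in> V"
    and v: "v \<in> V" "v \<bullet> v = 1"
    and max: "\<And>y. y \<in> V \<Longrightarrow> y \<bullet> (A *v y) \<le> (v \<bullet> (A *v v)) * (y \<bullet> y)"
  shows "A *v v = (v \<bullet> (A *v v)) *\<^sub>R v"
proof -
  define l where "l = v \<bullet> (A *v v)"
  define w where "w = A *v v - l *\<^sub>R v"
  have "w \<in> V"
    unfolding w_def using V inv v by (simp add: subspace_diff subspace_scale)
  have wAv: "w \<bullet> (A *v v) = w \<bullet> w + l * (w \<bullet> v)"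
    unfolding w_def by (simp add: inner_diff_right inner_diff_left algebra_simps)
  have "2*t*(w \<bullet> w) + t^2 * (w \<bullet> (A *v w) - l * (w \<bullet> w)) \<le> 0" for t
  proof -
    have "v + t *\<^sub>R w \<in> V"
      using V v \<open>w \<in> V\<close> by (simp add: subspace_add subspace_scale)
    then have "(v + t *\<^sub>R w) \<bullet> (A *v (v + t *\<^sub>R w)) \<le> l * ((v + t *\<^sub>R w) \<bullet> (v + t *\<^sub>R w))"
      using max unfolding l_def by blast
    moreover have "(v + t *\<^sub>R w) \<bullet> (A *v (v + t *\<^sub>R w))
        = l + 2*t*(w \<bullet> w) + 2*t*l*(w \<bullet> v) + t^2 * (w \<bullet> (A *v w))"
      using sym_mat_inner[OF sym, of v w] wAv
      by (simp add: matrix_vector_right_distrib matrix_vector_mult_scaleR inner_add_left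
          inner_add_right l_def power2_eq_square algebra_simps inner_commute)
    moreover have "(v + t *\<^sub>R w) \<bullet> (v + t *\<^sub>R w) = 1 + 2*t*(w \<bullet> v) + t^2 * (w \<bullet> w)"
      using v(2) by (simp add: inner_add_left inner_add_right power2_eq_square algebra_simps inner_commute)
    ultimately have "l + 2*t*(w \<bullet> w) + 2*t*l*(w \<bullet> v) + t^2 * (w \<bullet> (A *v w))
        \<le> l * (1 + 2*t*(w \<bullet> v) + t^2 * (w \<bullet> w))"
      by simp
    then show ?thesis by (simp add: algebra_simps)
  qed
  then have "w \<bullet> w = 0"
    by (rule quadratic_nonpos_imp_linear_coeff_zero)
  then show ?thesis unfolding w_def l_def by simp
qed

lemma rayleigh_maximizer_exists:
  fixes A :: "real^'n^'n"
  assumes V: "subspace V" and "x \<in> V" "x \<noteq> 0"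
  obtains v where "v \<in> V" "v \<bullet> v = 1" "\<And>y. y \<in> V \<Longrightarrow> y \<bullet> (A *v y) \<le> (v \<bullet> (A *v v)) * (y \<bullet> y)"
proof -
  define K where "K = sphere 0 1 \<inter> V"
  have "x /\<^sub>R norm x \<in> K"
    unfolding K_def using assms by (simp add: subspace_scale)
  moreover have "compact K"
    unfolding K_def using V by (simp add: compact_Int_closed closed_subspace)
  moreover have "continuous_on K (\<lambda>y. y \<bullet> (A *v y))"
    by (intro continuous_on_inner continuous_on_id linear_continuous_on matrix_vector_mul_bounded_linear)
  ultimately obtain v where "v \<in> K" and vmax: "\<And>y. y \<in> K \<Longrightarrow> y \<bullet> (A *v y) \<le> v \<bullet> (A *v v)"
    using continuous_attains_sup by (metis empty_iff)
  have "y \<bullet> (A *v y) \<le> (v \<bullet> (A *v v)) * (y \<bullet> y)" if "y \<in> V" for y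
  proof (cases "y = 0")
    case False
    then have "y /\<^sub>R norm y \<in> K"
      using that V unfolding K_def by (simp add: subspace_scale)
    then have "(y /\<^sub>R norm y) \<bullet> (A *v (y /\<^sub>R norm y)) \<le> v \<bullet> (A *v v)"
      by (rule vmax)
    then have "(y \<bullet> (A *v y)) / (norm y)^2 \<le> v \<bullet> (A *v v)"
      by (simp add: matrix_vector_mult_scaleR power2_eq_square divide_inverse mult_ac)
    then show ?thesis
      using False by (simp add: divide_le_eq power2_norm_eq_inner mult.commute)
  qed simp
  moreover have "v \<in> V" "v \<bullet> v = 1"
    using \<open>v \<in> K\<close> unfolding K_def by (auto simp: norm_eq_1)
  ultimately show ?thesis
    using that by blast
qed

lemma sym_mat_eigenvector_orthogonal:
  fixes A :: "real^'n^'n"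
  assumes sym: "sym_mat A" and "finite B" and eig: "\<forall>b\<in>B. \<exists>\<mu>. A *v b = \<mu> *\<^sub>R b"
    and "card B < CARD('n)"
  shows "\<exists>v. v \<bullet> v = 1 \<and> (\<forall>b\<in>B. v \<bullet> b = 0) \<and> (\<exists>\<mu>. A *v v = \<mu> *\<^sub>R v)"
proof -
  define V where "V = {x::real^'n. \<forall>b\<in>B. x \<bullet> b = 0}"
  have "subspace V"
    unfolding V_def subspace_def by (simp add: inner_add_left)
  have invariant: "A *v x \<in> V" if "x \<in> V" for x
    unfolding V_def
  proof (intro CollectI ballI)
    fix b assume "b \<in> B"
    then obtain \<mu> where "A *v b = \<mu> *\<^sub>R b" using eig by blast
    then show "(A *v x) \<bullet> b = 0"
      using sym_mat_inner[OF sym, of x b] that \<open>b \<in> B\<close> unfolding V_def by (simp add: inner_commute)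
  qed
  have "dim B < DIM(real^'n)"
    using \<open>finite B\<close> \<open>card B < CARD('n)\<close> dim_le_card[of B B] by (simp add: span_superset)
  then obtain x :: "real^'n" where "x \<noteq> 0" "\<And>y. y \<in> span B \<Longrightarrow> orthogonal x y"
    using orthogonal_to_subspace_exists by blast
  then have "x \<in> V"
    unfolding V_def by (auto simp: span_base orthogonal_def)
  then obtain v where "v \<in> V" "v \<bullet> v = 1"
    and "\<And>y. y \<in> V \<Longrightarrow> y \<bullet> (A *v y) \<le> (v \<bullet> (A *v v)) * (y \<bullet> y)"
    using rayleigh_maximizer_exists[OF \<open>subspace V\<close> _ \<open>x \<noteq> 0\<close>] by metis
  then have "A *v v = (v \<bullet> (A *v v)) *\<^sub>R v"
    using rayleigh_maximizer_eigenvector[OF sym \<open>subspace V\<close> invariant] by blast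
  then show ?thesis
    using \<open>v \<bullet> v = 1\<close> \<open>v \<in> V\<close> unfolding V_def by blast
qed

definition orthonormal_basis :: "(real^'n) set \<Rightarrow> bool" where
  "orthonormal_basis B \<longleftrightarrow>
     finite B \<and> pairwise orthogonal B \<and> (\<forall>b\<in>B. b \<bullet> b = 1) \<and> span B = UNIV"

definition orthonormal_eigenbasis ::
    "real^'n^'n \<Rightarrow> (real^'n) set \<Rightarrow> (real^'n \<Rightarrow> real) \<Rightarrow> bool" where
  "orthonormal_eigenbasis A B mu \<longleftrightarrow> orthonormal_basis B \<and> (\<forall>b\<in>B. A *v b = mu b *\<^sub>R b)"

lemma orthonormal_basisD:
  assumes "orthonormal_basis B"
  shows "finite B" "\<And>b. b \<in> B \<Longrightarrow> b \<bullet> b = 1"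
    "\<And>b c. b \<in> B \<Longrightarrow> c \<in> B \<Longrightarrow> b \<noteq> c \<Longrightarrow> b \<bullet> c = 0" "span B = UNIV"
  using assms unfolding orthonormal_basis_def pairwise_def orthogonal_def by auto

lemma orthonormal_basis_sum_coeff:
  assumes "orthonormal_basis B" "c \<in> B"
  shows "(\<Sum>b\<in>B. f b * (b \<bullet> c)) = f c"
proof -
  have "(\<Sum>b\<in>B. f b * (b \<bullet> c)) = (\<Sum>b\<in>B. if b = c then f c else 0)"
    using orthonormal_basisD[OF assms(1)] assms(2) by (intro sum.cong) auto
  also have "\<dots> = f c"
    using assms(2) orthonormal_basisD(1)[OF assms(1)] by simp
  finally show ?thesis .
qed

lemma orthonormal_basis_expansion:
  assumes "orthonormal_basis B"
  shows "x = (\<Sum>b\<in>B. (x \<bullet> b) *\<^sub>R b)"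
proof -
  define y where "y = x - (\<Sum>b\<in>B. (x \<bullet> b) *\<^sub>R b)"
  have "y \<bullet> c = 0" if "c \<in> B" for c
    using orthonormal_basis_sum_coeff[OF assms that, of "\<lambda>b. x \<bullet> b"]
    unfolding y_def by (simp add: inner_diff_left inner_sum_left)
  then have "orthogonal y z" if "z \<in> span B" for z
    using orthogonal_to_span[OF that] by (simp add: orthogonal_def inner_commute)
  then have "orthogonal y y"
    using orthonormal_basisD(4)[OF assms] by auto
  then show ?thesis unfolding y_def orthogonal_def by simp
qed

lemma orthonormal_basis_parseval:
  assumes "orthonormal_basis B"
  shows "x \<bullet> y = (\<Sum>b\<in>B. (x \<bullet> b) * (y \<bullet> b))"
proof -
  have "x \<bullet> y = (\<Sum>b\<in>B. (x \<bullet> b) *\<^sub>R b) \<bullet> y"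
    using orthonormal_basis_expansion[OF assms, of x] by simp
  also have "\<dots> = (\<Sum>b\<in>B. (x \<bullet> b) * (b \<bullet> y))"
    by (simp add: inner_sum_left)
  finally show ?thesis by (simp add: inner_commute)
qed

lemma orthonormal_basis_nonzero_coeff:
  "orthonormal_basis B \<Longrightarrow> x \<noteq> 0 \<Longrightarrow> \<exists>b\<in>B. x \<bullet> b \<noteq> 0"
  using orthonormal_basis_parseval[of B x x]
  by (metis (no_types, lifting) inner_eq_zero_iff mult_zero_left sum.neutral)

lemma orthonormal_basis_nonempty: "orthonormal_basis (B::(real^'n) set) \<Longrightarrow> B \<noteq> {}"
  using orthonormal_basisD(4)[of B] by (metis UNIV_not_singleton span_empty)

lemma sym_mat_orthonormal_eigenvectors:
  fixes A :: "real^'n^'n"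
  assumes "sym_mat A" "k \<le> CARD('n)"
  shows "\<exists>B. finite B \<and> card B = k \<and> pairwise orthogonal B \<and> (\<forall>b\<in>B. b \<bullet> b = 1)
           \<and> (\<forall>b\<in>B. \<exists>\<mu>. A *v b = \<mu> *\<^sub>R b)"
  using assms(2)
proof (induction k)
  case (Suc k)
  then obtain B where B: "finite B" "card B = k" "pairwise orthogonal B" "\<forall>b\<in>B. b \<bullet> b = 1"
    "\<forall>b\<in>B. \<exists>\<mu>. A *v b = \<mu> *\<^sub>R b" by auto
  then obtain v where v: "v \<bullet> v = 1" "\<forall>b\<in>B. v \<bullet> b = 0" "\<exists>\<mu>. A *v v = \<mu> *\<^sub>R v"
    using sym_mat_eigenvector_orthogonal[OF assms(1), of B] Suc.prems by auto
  then have "v \<notin> B"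
    using B(4) by auto
  moreover have "pairwise orthogonal (insert v B)"
    using B(3) v(2) by (auto simp: pairwise_insert orthogonal_def inner_commute)
  ultimately show ?case
    using B v by (intro exI[of _ "insert v B"]) auto
qed (intro exI[of _ "{}"], auto)

theorem spectral_theorem:
  fixes A :: "real^'n^'n"
  assumes "sym_mat A"
  obtains B mu where "orthonormal_eigenbasis A B mu"
proof -
  obtain B where B: "finite B" "card B = CARD('n)" "pairwise orthogonal B" "\<forall>b\<in>B. b \<bullet> b = 1"
    "\<forall>b\<in>B. \<exists>\<mu>. A *v b = \<mu> *\<^sub>R b"
    using sym_mat_orthonormal_eigenvectors[OF assms order_refl] by blast
  have "0 \<notin> B"
    using B(4) by fastforce
  then have "independent B"
    using B(3) pairwise_orthogonal_independent by blast
  then have "span B = UNIV"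
    using B card_ge_dim_independent[of B UNIV] by auto
  then have "orthonormal_basis B"
    unfolding orthonormal_basis_def using B by auto
  moreover have "\<forall>b\<in>B. A *v b = (SOME \<mu>. A *v b = \<mu> *\<^sub>R b) *\<^sub>R b"
    using B(5) by (metis (mono_tags, lifting) someI_ex)
  ultimately show ?thesis
    by (intro that[of B "\<lambda>b. SOME \<mu>. A *v b = \<mu> *\<^sub>R b"]) (simp add: orthonormal_eigenbasis_def)
qed

context
  fixes A :: "real^'n^'n" and B and mu
  assumes eb: "orthonormal_eigenbasis A B mu"
begin

lemma orthonormal_eigenbasisD:
  "orthonormal_basis B" "\<And>b. b \<in> B \<Longrightarrow> A *v b = mu b *\<^sub>R b"
  using eb unfolding orthonormal_eigenbasis_def by auto

lemma eigenbasis_coeff: "c \<in> B \<Longrightarrow> (A *v y) \<bullet> c = mu c * (y \<bullet> c)"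
proof -
  assume "c \<in> B"
  have "A *v y = A *v (\<Sum>b\<in>B. (y \<bullet> b) *\<^sub>R b)"
    using orthonormal_basis_expansion[OF orthonormal_eigenbasisD(1)] by simp
  also have "\<dots> = (\<Sum>b\<in>B. (mu b * (y \<bullet> b)) *\<^sub>R b)"
    by (simp add: linear_sum[OF matrix_vector_mul_linear] matrix_vector_mult_scaleR
        orthonormal_eigenbasisD(2) mult.commute cong: sum.cong)
  finally show ?thesis
    using orthonormal_basis_sum_coeff[OF orthonormal_eigenbasisD(1) \<open>c \<in> B\<close>]
    by (simp add: inner_sum_left)
qed

lemma eigenbasis_quadratic_form: "x \<bullet> (A *v y) = (\<Sum>b\<in>B. mu b * (x \<bullet> b) * (y \<bullet> b))"
  using orthonormal_basis_parseval[OF orthonormal_eigenbasisD(1), of x "A *v y"]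
  by (simp add: eigenbasis_coeff mult_ac cong: sum.cong)

lemma eigenbasis_norm_square: "(A *v x) \<bullet> (A *v x) = (\<Sum>b\<in>B. (mu b)^2 * (x \<bullet> b)^2)"
  using orthonormal_basis_parseval[OF orthonormal_eigenbasisD(1), of "A *v x" "A *v x"]
  by (simp add: eigenbasis_coeff power2_eq_square mult_ac cong: sum.cong)

lemma sym_mat_if_eigenbasis: "sym_mat A"
  by (rule sym_matI_inner) (simp add: eigenbasis_quadratic_form inner_commute mult_ac)

lemma eigenvalues_eigenbasis: "eigenvalues A = mu ` B"
proof
  show "eigenvalues A \<subseteq> mu ` B"
  proof
    fix l assume "l \<in> eigenvalues A"
    then obtain v where v: "v \<noteq> 0" "A *v v = l *\<^sub>R v"
      unfolding eigenvalues_def by auto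
    then obtain b where b: "b \<in> B" "v \<bullet> b \<noteq> 0"
      using orthonormal_basis_nonzero_coeff[OF orthonormal_eigenbasisD(1)] by blast
    then have "l * (v \<bullet> b) = mu b * (v \<bullet> b)"
      using eigenbasis_coeff[of b v] v(2) by simp
    then show "l \<in> mu ` B"
      using b by simp
  qed
  show "mu ` B \<subseteq> eigenvalues A"
  proof
    fix l assume "l \<in> mu ` B"
    then obtain b where "b \<in> B" "l = mu b"
      by blast
    moreover have "b \<noteq> 0"
      using orthonormal_basisD(2)[OF orthonormal_eigenbasisD(1) \<open>b \<in> B\<close>] by force
    ultimately show "l \<in> eigenvalues A"
      unfolding eigenvalues_def using orthonormal_eigenbasisD(2) by blast
  qed
qed

lemma eigenbasis_lambda_bounds:
  assumes "b \<in> B"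
  shows "mu b \<le> lambda_max A" "lambda_min A \<le> mu b"
  using assms orthonormal_basisD(1)[OF orthonormal_eigenbasisD(1)]
  unfolding lambda_max_def lambda_min_def eigenvalues_eigenbasis by simp_all

lemma eigenbasis_lambda_attained:
  "\<exists>b\<in>B. lambda_max A = mu b" "\<exists>b\<in>B. lambda_min A = mu b"
proof -
  have "finite (mu ` B)" "mu ` B \<noteq> {}"
    using orthonormal_eigenbasisD(1) orthonormal_basisD(1) orthonormal_basis_nonempty by auto
  then show "\<exists>b\<in>B. lambda_max A = mu b" "\<exists>b\<in>B. lambda_min A = mu b"
    unfolding lambda_max_def lambda_min_def eigenvalues_eigenbasis
    using Max_in Min_in by blast+
qed

lemma eigenbasis_weighted_sum_mono:
  assumes "\<And>b. b \<in> B \<Longrightarrow> f (mu b) \<le> g (mu b)"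
  shows "(\<Sum>b\<in>B. f (mu b) * (x \<bullet> b)^2) \<le> (\<Sum>b\<in>B. g (mu b) * (x \<bullet> b)^2)"
  using assms by (intro sum_mono mult_right_mono) auto

lemma eigenbasis_quadratic_form_square: "x \<bullet> (A *v x) = (\<Sum>b\<in>B. mu b * (x \<bullet> b)^2)"
  by (simp add: eigenbasis_quadratic_form power2_eq_square mult.assoc)

lemma eigenbasis_inner_self: "x \<bullet> x = (\<Sum>b\<in>B. 1 * (x \<bullet> b)^2)"
  using orthonormal_basis_parseval[OF orthonormal_eigenbasisD(1), of x x]
  by (simp add: power2_eq_square)

lemma eigenbasis_posdef_iff: "posdef A \<longleftrightarrow> (\<forall>b\<in>B. mu b > 0)"
proof
  assume "posdef A"
  show "\<forall>b\<in>B. mu b > 0"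
  proof
    fix b assume "b \<in> B"
    then have "b \<bullet> b = 1"
      using orthonormal_basisD(2)[OF orthonormal_eigenbasisD(1)] by blast
    then show "mu b > 0"
      using \<open>posdef A\<close> orthonormal_eigenbasisD(2)[OF \<open>b \<in> B\<close>] unfolding posdef_def
      by (metis inner_scaleR_right inner_zero_left mult.right_neutral zero_neq_one)
  qed
next
  assume pos: "\<forall>b\<in>B. mu b > 0"
  have "x \<bullet> (A *v x) > 0" if "x \<noteq> 0" for x
  proof -
    obtain c where "c \<in> B" "x \<bullet> c \<noteq> 0"
      using orthonormal_basis_nonzero_coeff[OF orthonormal_eigenbasisD(1) \<open>x \<noteq> 0\<close>] by blast
    have "0 < (\<Sum>b\<in>B. mu b * ((x \<bullet> b) * (x \<bullet> b)))"
    proof (rule sum_pos2[OF orthonormal_basisD(1)[OF orthonormal_eigenbasisD(1)] \<open>c \<in> B\<close>])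
      show "0 < mu c * ((x \<bullet> c) * (x \<bullet> c))"
        using pos \<open>c \<in> B\<close> \<open>x \<bullet> c \<noteq> 0\<close> not_real_square_gt_zero by (blast intro: mult_pos_pos)
      show "0 \<le> mu b * ((x \<bullet> b) * (x \<bullet> b))" if "b \<in> B" for b
        using pos that by (simp add: less_imp_le)
    qed
    then show ?thesis
      by (simp add: eigenbasis_quadratic_form mult.assoc)
  qed
  then show "posdef A"
    unfolding posdef_def using sym_mat_if_eigenbasis by blast
qed

end

lemma rayleigh_bounds:
  fixes A :: "real^'n^'n"
  assumes "sym_mat A"
  shows "lambda_min A * (x \<bullet> x) \<le> x \<bullet> (A *v x)" "x \<bullet> (A *v x) \<le> lambda_max A * (x \<bullet> x)"
proof -
  obtain B mu where eb: "orthonormal_eigenbasis A B mu"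
    using spectral_theorem[OF assms] .
  note sums = eigenbasis_quadratic_form_square[OF eb] eigenbasis_inner_self[OF eb]
  show "lambda_min A * (x \<bullet> x) \<le> x \<bullet> (A *v x)"
    using eigenbasis_weighted_sum_mono[OF eb, of "\<lambda>_. lambda_min A" "\<lambda>\<mu>. \<mu>" x]
    unfolding sums by (simp add: eigenbasis_lambda_bounds[OF eb] sum_distrib_left)
  show "x \<bullet> (A *v x) \<le> lambda_max A * (x \<bullet> x)"
    using eigenbasis_weighted_sum_mono[OF eb, of "\<lambda>\<mu>. \<mu>" "\<lambda>_. lambda_max A" x]
    unfolding sums by (simp add: eigenbasis_lambda_bounds[OF eb] sum_distrib_left)
qed

lemma lambda_max_le:
  fixes A :: "real^'n^'n"
  assumes "sym_mat A" "\<And>x. x \<bullet> (A *v x) \<le> c * (x \<bullet> x)"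
  shows "lambda_max A \<le> c"
proof -
  obtain B mu where eb: "orthonormal_eigenbasis A B mu"
    using spectral_theorem[OF assms(1)] .
  then obtain b where "b \<in> B" "lambda_max A = mu b"
    using eigenbasis_lambda_attained(1) by blast
  moreover have "b \<bullet> b = 1"
    using \<open>b \<in> B\<close> orthonormal_basisD(2)[OF orthonormal_eigenbasisD(1)[OF eb]] by blast
  ultimately show ?thesis
    using assms(2)[of b] orthonormal_eigenbasisD(2)[OF eb \<open>b \<in> B\<close>] by simp
qed

lemma lambda_min_le_lambda_max: "sym_mat (A::real^'n^'n) \<Longrightarrow> lambda_min A \<le> lambda_max A"
  by (metis spectral_theorem eigenbasis_lambda_attained(1) eigenbasis_lambda_bounds(2))

lemma posdef_lambda_min_pos: "posdef (A::real^'n^'n) \<Longrightarrow> lambda_min A > 0"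
  by (metis spectral_theorem eigenbasis_lambda_attained(2) eigenbasis_posdef_iff posdef_def)

lemma posdef_norm_square_bounds:
  fixes A :: "real^'n^'n"
  assumes "posdef A"
  shows "lambda_min A * (x \<bullet> (A *v x)) \<le> (A *v x) \<bullet> (A *v x)"
    "(A *v x) \<bullet> (A *v x) \<le> lambda_max A * (x \<bullet> (A *v x))"
proof -
  obtain B mu where eb: "orthonormal_eigenbasis A B mu"
    using spectral_theorem assms posdef_def by blast
  have pos: "\<And>b. b \<in> B \<Longrightarrow> mu b > 0"
    using eigenbasis_posdef_iff[OF eb] assms by blast
  note sums = eigenbasis_quadratic_form_square[OF eb] eigenbasis_norm_square[OF eb]
  show "lambda_min A * (x \<bullet> (A *v x)) \<le> (A *v x) \<bullet> (A *v x)"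
    using eigenbasis_weighted_sum_mono[OF eb, of "\<lambda>\<mu>. lambda_min A * \<mu>" "\<lambda>\<mu>. \<mu>^2" x]
    unfolding sums
    by (simp add: eigenbasis_lambda_bounds[OF eb] pos power2_eq_square sum_distrib_left mult.assoc)
  show "(A *v x) \<bullet> (A *v x) \<le> lambda_max A * (x \<bullet> (A *v x))"
    using eigenbasis_weighted_sum_mono[OF eb, of "\<lambda>\<mu>. \<mu>^2" "\<lambda>\<mu>. lambda_max A * \<mu>" x]
    unfolding sums
    by (simp add: eigenbasis_lambda_bounds[OF eb] pos power2_eq_square sum_distrib_left mult.assoc)
qed

lemma posdef_nonneg: "posdef (A::real^'n^'n) \<Longrightarrow> 0 \<le> x \<bullet> (A *v x)"
  unfolding posdef_def by (cases "x = 0") (auto intro: less_imp_le)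

lemma posdef_invertible: "posdef (A::real^'n^'n) \<Longrightarrow> invertible A"
  by (rule invertible_if_inj, rule injI)
    (metis posdef_def matrix_vector_mult_diff_distrib inner_zero_right less_irrefl right_minus_eq)

lemma psd_invertible_imp_posdef:
  fixes A :: "real^'n^'n"
  assumes "sym_mat A" "\<And>x. 0 \<le> x \<bullet> (A *v x)" "invertible A"
  shows "posdef A"
proof -
  obtain B mu where eb: "orthonormal_eigenbasis A B mu"
    using spectral_theorem[OF assms(1)] .
  have "mu b > 0" if "b \<in> B" for b
  proof -
    have "b \<bullet> b = 1" "A *v b = mu b *\<^sub>R b"
      using that orthonormal_eigenbasisD[OF eb] orthonormal_basisD(2) by auto
    moreover have "A *v b \<noteq> 0"
      using \<open>b \<bullet> b = 1\<close> inj_matrix_vector_mult[OF assms(3)]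
      by (metis inner_zero_left injD matrix_vector_mult_0_right zero_neq_one)
    ultimately show ?thesis
      using assms(2)[of b] by (metis inner_scaleR_right less_eq_real_def mult.right_neutral scaleR_zero_left)
  qed
  then show ?thesis
    using eigenbasis_posdef_iff[OF eb] by blast
qed

lemma posdef_matrix_inv:
  fixes A :: "real^'n^'n"
  assumes "posdef A"
  shows "posdef (matrix_inv A)"
proof (rule psd_invertible_imp_posdef)
  have inv: "invertible A"
    by (rule posdef_invertible[OF assms])
  show "sym_mat (matrix_inv A)"
    using assms inv posdef_def sym_mat_matrix_inv by blast
  show "0 \<le> x \<bullet> (matrix_inv A *v x)" for x
    using posdef_nonneg[OF assms, of "matrix_inv A *v x"]
    by (simp add: matrix_vector_mul_assoc matrix_inv_right[OF inv] inner_commute)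
  show "invertible (matrix_inv A)"
    by (rule invertible_matrix_inv[OF inv])
qed

lemma posdef_matrix_inv_quadratic_le:
  fixes A :: "real^'n^'n"
  assumes "posdef A"
  shows "y \<bullet> (matrix_inv A *v y) \<le> (y \<bullet> y) / lambda_min A"
proof -
  have inv: "invertible A"
    by (rule posdef_invertible[OF assms])
  define z where "z = matrix_inv A *v y"
  have "y = A *v z"
    unfolding z_def by (simp add: matrix_vector_mul_assoc matrix_inv_right[OF inv])
  then have "lambda_min A * (z \<bullet> (A *v z)) \<le> y \<bullet> y"
    using posdef_norm_square_bounds(1)[OF assms, of z] by simp
  moreover have "y \<bullet> (matrix_inv A *v y) = z \<bullet> (A *v z)"
    unfolding z_def by (simp add: matrix_vector_mul_assoc matrix_inv_right[OF inv] inner_commute)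
  ultimately show ?thesis
    using posdef_lambda_min_pos[OF assms] by (simp add: field_simps)
qed

lemma posdef_congruence:
  fixes A :: "real^'m^'m" and N :: "real^'n^'m"
  assumes "posdef A" "inj ((*v) N)"
  shows "posdef (transpose N ** A ** N)"
  unfolding posdef_def
proof (intro conjI allI impI)
  show "sym_mat (transpose N ** A ** N)"
    using assms(1) sym_mat_congruence unfolding posdef_def by blast
  show "x \<bullet> ((transpose N ** A ** N) *v x) > 0" if "x \<noteq> 0" for x
    using assms that unfolding posdef_def inner_congruence
    by (metis injD matrix_vector_mult_0_right)
qed

section \<open>Matrix square roots and pseudoinverses\<close>

definition spectral_matrix :: "(real^'n) set \<Rightarrow> (real^'n \<Rightarrow> real) \<Rightarrow> real^'n^'n" where
  "spectral_matrix B d = matrix (\<lambda>x. \<Sum>b\<in>B. (d b * (x \<bullet> b)) *\<^sub>R b)"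

lemma orthonormal_eigenbasis_spectral_matrix:
  fixes B :: "(real^'n) set"
  assumes "orthonormal_basis B"
  shows "orthonormal_eigenbasis (spectral_matrix B d) B d"
proof -
  have "linear (\<lambda>x. \<Sum>b\<in>B. (d b * (x \<bullet> b)) *\<^sub>R (b::real^'n))"
    by (rule linearI)
      (simp_all add: inner_add_left distrib_left scaleR_add_left sum.distrib
        scaleR_sum_right mult.left_commute)
  then have "spectral_matrix B d *v x = (\<Sum>b\<in>B. (d b * (x \<bullet> b)) *\<^sub>R b)" for x
    unfolding spectral_matrix_def by (simp add: matrix_works)
  moreover have "(\<Sum>b\<in>B. (d b * (c \<bullet> b)) *\<^sub>R b) = d c *\<^sub>R c" if "c \<in> B" for c
  proof -
    have "(\<Sum>b\<in>B. (d b * (c \<bullet> b)) *\<^sub>R b) = (\<Sum>b\<in>B. if b = c then d c *\<^sub>R c else 0)"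
      using orthonormal_basisD[OF assms] that by (intro sum.cong) (auto simp: inner_commute)
    then show ?thesis
      using that orthonormal_basisD(1)[OF assms] by simp
  qed
  ultimately show ?thesis
    unfolding orthonormal_eigenbasis_def using assms by simp
qed

lemma matrix_eq_on_spanning:
  fixes M N :: "real^'n^'m"
  assumes "span C = UNIV" "\<And>b. b \<in> C \<Longrightarrow> M *v b = N *v b"
  shows "M = N"
proof -
  have "M *v x = N *v x" for x
    using linear_eq_on_span[OF matrix_vector_mul_linear matrix_vector_mul_linear, of C] assms by auto
  then show ?thesis by (simp add: matrix_eq)
qed

lemma posdef_square_root_eigenvector:
  fixes R :: "real^'n^'n"
  assumes R: "posdef R" and G: "G = R ** R" and v: "G *v v = g *\<^sub>R v"
  shows "R *v v = sqrt g *\<^sub>R v"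
proof (cases "v = 0")
  case False
  have "g * (v \<bullet> v) = (R *v v) \<bullet> (R *v v)"
    using v sym_mat_inner[of R v "R *v v"] R unfolding G posdef_def
    by (simp add: matrix_vector_mul_assoc[symmetric])
  then have "g \<ge> 0"
    using False by (metis inner_ge_zero inner_gt_zero_iff zero_le_mult_iff not_less)
  define w where "w = R *v v - sqrt g *\<^sub>R v"
  have "R *v w = - (sqrt g *\<^sub>R w)"
    using v \<open>g \<ge> 0\<close> unfolding w_def G
    by (simp add: matrix_vector_mult_diff_distrib matrix_vector_mult_scaleR algebra_simps
        matrix_vector_mul_assoc[symmetric])
  then have "w \<bullet> (R *v w) \<le> 0"
    using \<open>g \<ge> 0\<close> by simp
  then have "w = 0"
    using R unfolding posdef_def by (meson not_less)
  then show ?thesis unfolding w_def by simp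
qed simp

lemma posdef_square_root_unique:
  fixes R1 R2 :: "real^'n^'n"
  assumes "posdef R1" "posdef R2" "R1 ** R1 = R2 ** R2"
  shows "R1 = R2"
proof -
  have "sym_mat (R1 ** R1)"
    using sym_mat_congruence[of "mat 1" R1] assms(1) unfolding posdef_def sym_mat_def
    by (simp add: matrix_transpose_mul)
  then obtain B mu where eb: "orthonormal_eigenbasis (R1 ** R1) B mu"
    using spectral_theorem by blast
  show ?thesis
  proof (rule matrix_eq_on_spanning)
    show "span B = UNIV"
      using orthonormal_basisD(4) orthonormal_eigenbasisD(1)[OF eb] by blast
    show "R1 *v b = R2 *v b" if "b \<in> B" for b
      using posdef_square_root_eigenvector[OF assms(1) refl orthonormal_eigenbasisD(2)[OF eb that]]
        posdef_square_root_eigenvector[OF assms(2) assms(3) orthonormal_eigenbasisD(2)[OF eb that]]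
      by simp
  qed
qed

lemma posdef_square_root_exists:
  fixes G :: "real^'n^'n"
  assumes "posdef G"
  shows "\<exists>R. posdef R \<and> R ** R = G"
proof -
  obtain B mu where eb: "orthonormal_eigenbasis G B mu"
    using spectral_theorem assms posdef_def by blast
  define R where "R = spectral_matrix B (\<lambda>b. sqrt (mu b))"
  have pos: "\<And>b. b \<in> B \<Longrightarrow> mu b > 0"
    using eigenbasis_posdef_iff[OF eb] assms by blast
  have ebR: "orthonormal_eigenbasis R B (\<lambda>b. sqrt (mu b))"
    unfolding R_def by (rule orthonormal_eigenbasis_spectral_matrix[OF orthonormal_eigenbasisD(1)[OF eb]])
  have "posdef R"
    using eigenbasis_posdef_iff[OF ebR] pos by simp
  moreover have "R ** R = G"
  proof (rule matrix_eq_on_spanning)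
    show "span B = UNIV"
      using orthonormal_basisD(4) orthonormal_eigenbasisD(1)[OF eb] by blast
    show "(R ** R) *v b = G *v b" if "b \<in> B" for b
      using orthonormal_eigenbasisD(2)[OF ebR that] orthonormal_eigenbasisD(2)[OF eb that] pos[OF that]
      by (simp add: matrix_vector_mul_assoc[symmetric] matrix_vector_mult_scaleR)
  qed
  ultimately show ?thesis by blast
qed

lemma posdef_msqrt: "posdef G \<Longrightarrow> posdef (msqrt G)"
  and msqrt_square: "posdef G \<Longrightarrow> msqrt G ** msqrt G = G"
proof -
  assume "posdef G"
  then have "\<exists>!R. posdef R \<and> R ** R = G"
    using posdef_square_root_exists posdef_square_root_unique by metis
  then have "posdef (msqrt G) \<and> msqrt G ** msqrt G = G"
    unfolding msqrt_def by (rule theI')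
  then show "posdef (msqrt G)" "msqrt G ** msqrt G = G" by auto
qed

lemma msqrt_eigenvector:
  "posdef G \<Longrightarrow> G *v v = g *\<^sub>R v \<Longrightarrow> msqrt G *v v = sqrt g *\<^sub>R v"
  using posdef_square_root_eigenvector posdef_msqrt msqrt_square by metis

definition penrose :: "real^'n^'m \<Rightarrow> real^'m^'n \<Rightarrow> bool" where
  "penrose A X \<longleftrightarrow> A ** X ** A = A \<and> X ** A ** X = X \<and>
                    transpose (A ** X) = A ** X \<and> transpose (X ** A) = X ** A"

lemma penrose_unique:
  assumes "penrose A X1" "penrose A X2"
  shows "X1 = X2"
proof -
  have a: "A ** X1 ** A = A" "X1 ** A ** X1 = X1" "transpose (A ** X1) = A ** X1"
      "transpose (X1 ** A) = X1 ** A"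
    using assms(1) penrose_def by blast+
  have b: "A ** X2 ** A = A" "X2 ** A ** X2 = X2" "transpose (A ** X2) = A ** X2"
      "transpose (X2 ** A) = X2 ** A"
    using assms(2) penrose_def by blast+
  have "X1 = X1 ** transpose (A ** X1)"
    using a(2,3) by (simp add: matrix_mul_assoc)
  also have "\<dots> = X1 ** transpose X1 ** transpose (A ** X2 ** A)"
    using b(1) by (simp add: matrix_transpose_mul matrix_mul_assoc)
  also have "\<dots> = X1 ** transpose (A ** X1) ** transpose (A ** X2)"
    by (simp add: matrix_transpose_mul matrix_mul_assoc)
  also have "\<dots> = (X1 ** A ** X1) ** A ** X2"
    using a(3) b(3) by (simp add: matrix_mul_assoc)
  finally have 1: "X1 = X1 ** A ** X2"
    using a(2) by simp
  have "X2 = transpose (X2 ** A) ** X2"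
    using b(2,4) by simp
  also have "\<dots> = transpose (A ** X1 ** A) ** transpose X2 ** X2"
    using a(1) by (simp add: matrix_transpose_mul)
  also have "\<dots> = transpose (X1 ** A) ** transpose (X2 ** A) ** X2"
    by (simp add: matrix_transpose_mul matrix_mul_assoc)
  also have "\<dots> = X1 ** A ** (X2 ** A ** X2)"
    using a(4) b(4) by (simp add: matrix_mul_assoc)
  finally have 2: "X2 = X1 ** A ** X2"
    using b(2) by simp
  show ?thesis using 1 2 by simp
qed

lemma penrose_gram_inverse:
  fixes A :: "real^'n^'m" and Bp :: "real^'n^'n"
  defines "G \<equiv> transpose A ** A"
  assumes "sym_mat Bp" "G ** Bp = Bp ** G" "Bp ** G ** Bp = Bp" "A ** Bp ** G = A"
  shows "penrose A (Bp ** transpose A)"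
  unfolding penrose_def
proof (intro conjI)
  show "A ** (Bp ** transpose A) ** A = A"
    using assms(5) unfolding G_def by (simp add: matrix_mul_assoc)
  show "Bp ** transpose A ** A ** (Bp ** transpose A) = Bp ** transpose A"
    using assms(4) unfolding G_def by (metis matrix_mul_assoc)
  show "transpose (A ** (Bp ** transpose A)) = A ** (Bp ** transpose A)"
    using assms(2) unfolding sym_mat_def by (simp add: matrix_transpose_mul matrix_mul_assoc)
  have "sym_mat G"
    unfolding G_def by (rule sym_mat_gram)
  then show "transpose (Bp ** transpose A ** A) = Bp ** transpose A ** A"
    using assms(2,3) unfolding sym_mat_def G_def by (simp add: matrix_transpose_mul matrix_mul_assoc)
qed

lemma gram_pseudo_inverse_exists:
  fixes A :: "real^'n^'m"
  defines "G \<equiv> transpose A ** A"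
  obtains Bp where "sym_mat Bp" "G ** Bp = Bp ** G" "Bp ** G ** Bp = Bp" "A ** Bp ** G = A"
proof -
  obtain B mu where eb: "orthonormal_eigenbasis G B mu"
    using spectral_theorem sym_mat_gram unfolding G_def by blast
  have span: "span B = UNIV"
    using orthonormal_basisD(4) orthonormal_eigenbasisD(1)[OF eb] by blast
  define Bp where "Bp = spectral_matrix B (\<lambda>b. inverse (mu b))"
  have ebBp: "orthonormal_eigenbasis Bp B (\<lambda>b. inverse (mu b))"
    unfolding Bp_def by (rule orthonormal_eigenbasis_spectral_matrix[OF orthonormal_eigenbasisD(1)[OF eb]])
  note eig = orthonormal_eigenbasisD(2)[OF eb] orthonormal_eigenbasisD(2)[OF ebBp]
  have "A *v b = 0" if "b \<in> B" "mu b = 0" for b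
    using inner_gram_matrix[of b A] eig(1)[OF that(1)] that(2) unfolding G_def by simp
  then have AGBp: "(A ** Bp ** G) *v b = A *v b" if "b \<in> B" for b
    using that eig[OF that] by (cases "mu b = 0")
      (simp_all add: matrix_vector_mul_assoc[symmetric] matrix_vector_mult_scaleR)
  show ?thesis
  proof (rule that)
    show "sym_mat Bp"
      by (rule sym_mat_if_eigenbasis[OF ebBp])
    show "G ** Bp = Bp ** G"
      by (rule matrix_eq_on_spanning[OF span])
        (simp add: eig matrix_vector_mul_assoc[symmetric] matrix_vector_mult_scaleR)
    show "Bp ** G ** Bp = Bp"
      by (rule matrix_eq_on_spanning[OF span])
        (simp add: eig matrix_vector_mul_assoc[symmetric] matrix_vector_mult_scaleR,
          metis right_inverse)
    show "A ** Bp ** G = A"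
      by (rule matrix_eq_on_spanning[OF span AGBp])
  qed
qed

lemma pinv_penrose: "penrose A (pinv A)"
proof -
  obtain Bp where "penrose A Bp"
    using gram_pseudo_inverse_exists penrose_gram_inverse by metis
  then have "pinv A = Bp"
    unfolding pinv_def using penrose_unique unfolding penrose_def by blast
  then show ?thesis
    using \<open>penrose A Bp\<close> by simp
qed

lemma sym_idempotent_quadratic:
  assumes "sym_mat P" "P ** P = (P::real^'n^'n)"
  shows "(P *v y) \<bullet> (P *v y) = y \<bullet> (P *v y)"
  using sym_mat_inner[OF assms(1), of y "P *v y"] assms(2)
  by (simp add: matrix_vector_mul_assoc)

lemma posdef_regularized_gram:
  fixes A :: "real^'n^'m"
  assumes "lam > 0"
  shows "posdef (transpose A ** A + lam *\<^sub>R mat 1)"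
  unfolding posdef_def
proof (intro conjI allI impI)
  show "sym_mat (transpose A ** A + lam *\<^sub>R mat 1)"
    using sym_mat_gram[of A] unfolding sym_mat_def
    by (simp add: transpose_def vec_eq_iff mat_def)
  show "x \<bullet> ((transpose A ** A + lam *\<^sub>R mat 1) *v x) > 0" if "x \<noteq> 0" for x
    using that assms inner_gram_matrix[of x A]
    by (simp add: matrix_vector_mult_add_rdistrib inner_add_right add_nonneg_pos
        flip: scaleR_matrix_vector_assoc)
qed

lemma regularized_gram_projection:
  fixes A :: "real^'n^'m"
  assumes "lam > 0"
  defines "P \<equiv> rpinv lam A ** A"
  shows "sym_mat P" "(P *v y) \<bullet> (P *v y) \<le> y \<bullet> (P *v y)"
proof -
  define G where "G = transpose A ** A"
  define C where "C = G + lam *\<^sub>R mat 1"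
  have Cv: "C *v x = G *v x + lam *\<^sub>R x" for x
    unfolding C_def by (simp add: matrix_vector_mult_add_rdistrib scaleR_matrix_vector_assoc[symmetric])
  have "posdef C"
    unfolding C_def G_def by (rule posdef_regularized_gram[OF assms(1)])
  then have Cinv: "invertible C" "sym_mat (matrix_inv C)"
    using posdef_invertible posdef_matrix_inv posdef_def by blast+
  have P: "P = matrix_inv C ** G"
    unfolding P_def rpinv_def C_def G_def using assms(1) by (simp add: matrix_mul_assoc)
  have Pv: "P *v x = x - lam *\<^sub>R (matrix_inv C *v x)" for x
  proof -
    have "G *v x = C *v x - lam *\<^sub>R x"
      by (simp add: Cv)
    moreover have "matrix_inv C *v (C *v x) = x"
      by (simp add: matrix_vector_mul_assoc matrix_inv_left[OF Cinv(1)])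
    ultimately show ?thesis
      unfolding P matrix_vector_mul_assoc[symmetric]
      by (simp add: matrix_vector_mult_diff_distrib matrix_vector_mult_scaleR)
  qed
  show "sym_mat P"
    by (rule sym_matI_inner)
      (simp add: Pv inner_diff_right inner_diff_left sym_mat_inner[OF Cinv(2)])
  define z where "z = matrix_inv C *v y"
  have y: "y = G *v z + lam *\<^sub>R z"
    unfolding z_def Cv[symmetric] by (simp add: matrix_vector_mul_assoc matrix_inv_right[OF Cinv(1)])
  have Py: "P *v y = G *v z"
    using Pv[of y] y unfolding z_def[symmetric] by (metis add_diff_cancel_right')
  have "y \<bullet> (P *v y) = (G *v z) \<bullet> (G *v z) + lam * (z \<bullet> (G *v z))"
    unfolding Py by (subst y) (simp add: inner_add_left)
  also have "\<dots> = (P *v y) \<bullet> (P *v y) + lam * ((A *v z) \<bullet> (A *v z))"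
    unfolding Py G_def inner_gram_matrix ..
  finally show "(P *v y) \<bullet> (P *v y) \<le> y \<bullet> (P *v y)"
    using assms(1) by simp
qed

lemma rpinv_mul_sym:
  "lam \<ge> 0 \<Longrightarrow> sym_mat (rpinv lam A ** (A::real^'n^'m))"
  using pinv_penrose[of A] regularized_gram_projection(1)[of lam A]
  unfolding penrose_def sym_mat_def rpinv_def by (cases "lam = 0") auto

lemma rpinv_mul_contraction:
  fixes A :: "real^'n^'m"
  assumes "lam \<ge> 0"
  defines "P \<equiv> rpinv lam A ** A"
  shows "(P *v y) \<bullet> (P *v y) \<le> y \<bullet> (P *v y)"
proof (cases "lam = 0")
  case True
  have "P ** P = P"
    using pinv_penrose[of A] True unfolding P_def penrose_def rpinv_def
    by (simp add: matrix_mul_assoc)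
  moreover have "sym_mat P"
    unfolding P_def by (rule rpinv_mul_sym[OF assms(1)])
  ultimately show ?thesis
    using sym_idempotent_quadratic[of P y] by simp
next
  case False
  then show ?thesis
    using assms(1) regularized_gram_projection(2)[of lam A y] unfolding P_def by simp
qed

section \<open>Averages over batches\<close>

lemma batches_nonempty: "k \<le> CARD('m::finite) \<Longrightarrow> batches k \<noteq> ({} :: 'm set set)"
  unfolding batches_def using obtain_subset_with_card_n[of k "UNIV :: 'm set"] by auto

lemma ES_real: "ES k (f :: 'm::finite set \<Rightarrow> real) = (\<Sum>S\<in>batches k. f S) / card (batches k :: 'm set set)"
  unfolding ES_def by simp

lemma ES_const:
  assumes "k \<le> CARD('m::finite)"
  shows "ES k (\<lambda>S::'m set. c :: real) = c"
  unfolding ES_real using batches_nonempty[OF assms] by simp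

lemma ES_add: "ES k (\<lambda>S. f S + g S) = ES k f + ES k g"
  unfolding ES_def by (simp add: sum.distrib scaleR_add_right)

lemma ES_diff: "ES k (\<lambda>S. f S - g S) = ES k f - ES k g"
  unfolding ES_def by (simp add: sum_subtractf scaleR_diff_right)

lemma ES_cmult: "ES k (\<lambda>S. c * f S) = c * ES k (f :: 'm::finite set \<Rightarrow> real)"
  unfolding ES_real by (simp add: sum_distrib_left)

lemma ES_mono:
  "(\<And>S. S \<in> batches k \<Longrightarrow> f S \<le> g S) \<Longrightarrow> ES k (f :: 'm::finite set \<Rightarrow> real) \<le> ES k g"
  unfolding ES_real by (intro divide_right_mono sum_mono) auto

lemma ES_nonneg:
  "(\<And>S. S \<in> batches k \<Longrightarrow> 0 \<le> f S) \<Longrightarrow> 0 \<le> ES k (f :: 'm::finite set \<Rightarrow> real)"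
  unfolding ES_real by (intro divide_nonneg_nonneg sum_nonneg) auto

lemma ES_pos:
  fixes f :: "'m::finite set \<Rightarrow> real"
  assumes "\<And>S. S \<in> batches k \<Longrightarrow> 0 \<le> f S" "T \<in> batches k" "0 < f T"
  shows "0 < ES k f"
  unfolding ES_real using assms by (intro divide_pos_pos sum_pos2) (auto simp: card_gt_0_iff)

lemma ES_nonzero: "ES k f \<noteq> 0 \<Longrightarrow> \<exists>S\<in>batches k. f S \<noteq> 0"
  unfolding ES_def by (metis scaleR_zero_right sum.neutral)

lemma ES_matrix_vector_mult:
  fixes F :: "'m::finite set \<Rightarrow> real^'n^'p"
  shows "ES k F *v y = ES k (\<lambda>S. F S *v y)"
proof -
  have "(\<Sum>S\<in>A. F S) *v y = (\<Sum>S\<in>A. F S *v y)" for A :: "'m set set"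
    by (induct A rule: infinite_finite_induct) (simp_all add: matrix_vector_mult_add_rdistrib)
  then show ?thesis
    unfolding ES_def by (simp add: scaleR_matrix_vector_assoc[symmetric])
qed

lemma inner_ES: "x \<bullet> ES k f = ES k (\<lambda>S. x \<bullet> f S)"
  unfolding ES_def by (simp add: inner_sum_right)

lemma sym_mat_ES:
  assumes "\<And>S. sym_mat (F S)"
  shows "sym_mat (ES k F :: real^'n^'n)"
proof (rule sym_matI_inner)
  fix x y :: "real^'n"
  have "x \<bullet> (ES k F *v y) = ES k (\<lambda>S. (F S *v x) \<bullet> y)"
    by (simp add: ES_matrix_vector_mult inner_ES sym_mat_inner[OF assms])
  also have "\<dots> = (ES k F *v x) \<bullet> y"
    by (simp add: ES_matrix_vector_mult inner_ES inner_commute)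
  finally show "x \<bullet> (ES k F *v y) = (ES k F *v x) \<bullet> y" .
qed

lemma sqnorm_in_diff:
  assumes "sym_mat W"
  shows "sqnorm_in W (e - eta *\<^sub>R v)
    = sqnorm_in W e - 2 * eta * ((W *v e) \<bullet> v) + eta^2 * sqnorm_in W v"
  using sym_mat_inner[OF assms, of v e] sym_mat_inner[OF assms, of e v]
  unfolding sqnorm_in_def
  by (simp add: matrix_vector_mult_diff_distrib matrix_vector_mult_scaleR inner_diff_left
      inner_diff_right power2_eq_square algebra_simps inner_commute)

lemma ES_sqnorm_in_update:
  fixes F :: "'m::finite set \<Rightarrow> real^'n^'n"
  assumes "sym_mat W" "k \<le> CARD('m)"
  shows "ES k (\<lambda>S. sqnorm_in W (e - eta *\<^sub>R (F S *v w)))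
    = sqnorm_in W e - 2 * eta * (e \<bullet> (W *v (ES k F *v w))) + eta^2 * ES k (\<lambda>S. sqnorm_in W (F S *v w))"
  unfolding sqnorm_in_diff[OF assms(1)] ES_add ES_diff ES_cmult ES_const[OF assms(2)]
  by (simp add: ES_matrix_vector_mult inner_ES sym_mat_inner[OF assms(1)] mult.assoc)

lemma E_seq_0: "E_seq k 0 (f :: 'm::finite set list \<Rightarrow> real) = f []"
proof -
  have "{Ss. Ss = [] \<and> set Ss \<subseteq> (batches k :: 'm set set)} = {[]}"
    by auto
  then show ?thesis unfolding E_seq_def by simp
qed

lemma E_seq_Suc:
  "E_seq k (Suc t) f = ES k (\<lambda>S::'m::finite set. E_seq k t (\<lambda>Ss. f (S # Ss)))"
proof -
  define A where "A = (batches k :: 'm set set)"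
  define L where "L = {Ss. length Ss = t \<and> set Ss \<subseteq> A}"
  have "{Ss. length Ss = Suc t \<and> set Ss \<subseteq> A} = (\<lambda>(S, Ss). S # Ss) ` (A \<times> L)"
    unfolding L_def by (auto simp: length_Suc_conv image_iff)
  moreover have "inj_on (\<lambda>(S, Ss). S # Ss) (A \<times> L)"
    by (auto simp: inj_on_def)
  ultimately have "(\<Sum>Ss | length Ss = Suc t \<and> set Ss \<subseteq> A. f Ss) = (\<Sum>(S, Ss)\<in>A \<times> L. f (S # Ss))"
    by (simp add: sum.reindex case_prod_unfold)
  also have "\<dots> = (\<Sum>S\<in>A. \<Sum>Ss\<in>L. f (S # Ss))"
    by (rule sum.cartesian_product[symmetric])
  finally show ?thesis
    unfolding E_seq_def ES_real A_def[symmetric] L_def[symmetric]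
    by (simp add: sum_divide_distrib mult.commute)
qed

lemma E_seq_fold_le:
  fixes step :: "'m::finite set \<Rightarrow> 'a \<Rightarrow> 'a"
  assumes step: "\<And>x. ES k (\<lambda>S. F (step S x)) \<le> rho * F x" and "0 \<le> rho"
  shows "E_seq k t (\<lambda>Ss. F (fold step Ss x)) \<le> rho ^ t * F x"
proof (induction t arbitrary: x)
  case 0
  then show ?case by (simp add: E_seq_0)
next
  case (Suc t)
  have "E_seq k (Suc t) (\<lambda>Ss. F (fold step Ss x))
      = ES k (\<lambda>S. E_seq k t (\<lambda>Ss. F (fold step Ss (step S x))))"
    by (simp add: E_seq_Suc)
  also have "\<dots> \<le> ES k (\<lambda>S. rho ^ t * F (step S x))"
    by (rule ES_mono) (rule Suc.IH)
  also have "\<dots> \<le> rho ^ t * (rho * F x)"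
    unfolding ES_cmult using step \<open>0 \<le> rho\<close> by (intro mult_left_mono) auto
  finally show ?case by (simp add: mult_ac)
qed

section \<open>Convergence of SNGD\<close>

lemma gram_posdef: "inj ((*v) (J::real^'n^'m)) \<Longrightarrow> posdef (transpose J ** J)"
  unfolding posdef_def using sym_mat_gram inner_gram_matrix
  by (metis inner_gt_zero_iff injD matrix_vector_mult_0_right)

lemma factor_through_injective:
  fixes J :: "real^'n^'m" and B :: "real^'p^'m"
  assumes "inj ((*v) J)" "range ((*v) B) \<subseteq> range ((*v) J)"
  shows "J ** (matrix_inv (transpose J ** J) ** transpose J ** B) = B"
proof -
  have inv: "invertible (transpose J ** J)"
    using gram_posdef[OF assms(1)] posdef_invertible by blast
  have "J *v ((matrix_inv (transpose J ** J) ** transpose J ** B) *v x) = B *v x" for x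
  proof -
    obtain y where y: "B *v x = J *v y"
      using assms(2) by blast
    have "(matrix_inv (transpose J ** J) ** transpose J ** B) *v x
        = (matrix_inv (transpose J ** J) ** (transpose J ** J)) *v y"
      by (simp add: y matrix_vector_mul_assoc[symmetric])
    then show ?thesis
      using y by (simp add: matrix_inv_left[OF inv])
  qed
  then show ?thesis
    by (simp add: matrix_eq matrix_vector_mul_assoc)
qed

lemma quadloss_minimizer:
  fixes H :: "real^'m^'m"
  assumes "sym_mat H" "\<forall>v. quadloss H q c v0 \<le> quadloss H q c v"
  shows "H *v v0 + q = 0"
proof -
  define d where "d = H *v v0 + q"
  have "2 * t * (- (d \<bullet> d)) + t^2 * (- (d \<bullet> (H *v d))) \<le> 0" for t
  proof -
    have dd: "d \<bullet> (H *v v0) + d \<bullet> q = d \<bullet> d"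
      unfolding d_def by (simp add: inner_add_right)
    have "quadloss H q c (v0 + t *\<^sub>R d)
        = quadloss H q c v0 + t * (d \<bullet> (H *v v0) + d \<bullet> q) + t^2 / 2 * (d \<bullet> (H *v d))"
      using sym_mat_inner[OF assms(1), of v0 d] unfolding quadloss_def
      by (simp add: matrix_vector_right_distrib matrix_vector_mult_scaleR inner_add_left
          inner_add_right algebra_simps power2_eq_square inner_commute)
    moreover have "quadloss H q c v0 \<le> quadloss H q c (v0 + t *\<^sub>R d)"
      using assms(2) by blast
    ultimately have "0 \<le> t * (d \<bullet> d) + t^2 / 2 * (d \<bullet> (H *v d))"
      unfolding dd by linarith
    then show ?thesis
      by (simp add: algebra_simps)
  qed
  then have "d \<bullet> d = 0"
    using quadratic_nonpos_imp_linear_coeff_zero by fastforce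
  then show ?thesis unfolding d_def by simp
qed

lemma sngd_step_error:
  assumes "H *v (J *v thstar) + q = 0" "J ** M = H ** J"
  shows "sngd_step eta lam J H q S th - thstar
    = (th - thstar) - eta *\<^sub>R (projP lam J S *v (M *v (th - thstar)))"
proof -
  have "H *v (J *v th) + q = H *v (J *v th) - H *v (J *v thstar)"
    using assms(1) by (simp add: eq_neg_iff_add_eq_0 algebra_simps)
  also have "\<dots> = J *v (M *v (th - thstar))"
    by (simp add: matrix_vector_mul_assoc assms(2) flip: matrix_vector_mult_diff_distrib)
  finally have grad: "H *v (J *v th) + q = J *v (M *v (th - thstar))" .
  have "JS_rpinv lam J S *v (rowsel S *v (J *v x)) = projP lam J S *v x" for x
    unfolding projP_def by (simp add: matrix_vector_mul_assoc)
  then show ?thesis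
    unfolding sngd_step_def grad by (simp add: algebra_simps)
qed

lemma sngd_iter_fold: "sngd_iter eta lam J H q Ss th = fold (sngd_step eta lam J H q) Ss th"
  by (induction Ss arbitrary: th) simp_all

locale sngd_setting =
  fixes J :: "real^'n::finite^'m::finite" and H :: "real^'m^'m" and lam :: real and k :: nat
  assumes rank_J: "rank J = CARD('n)"
    and posdef_H: "posdef H"
    and range_HJ: "range ((*v) (H ** J)) \<subseteq> range ((*v) J)"
    and k_le: "k \<le> CARD('m)"
    and lam_nonneg: "lam \<ge> 0"
    and invertible_Pbar: "invertible (ES k (projP lam J) :: real^'n^'n)"
    and Pbar_share_eigenbasis: "share_eigenbasis (ES k (projP lam J)) (transpose J ** J)"
begin

definition G :: "real^'n^'n" where "G = transpose J ** J"
definition G_sqrt :: "real^'n^'n" where "G_sqrt = msqrt G"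
definition G_isqrt :: "real^'n^'n" where "G_isqrt = matrix_inv G_sqrt"
definition Pbar :: "real^'n^'n" where "Pbar = ES k (projP lam J)"
definition Qbar :: "real^'n^'n" where "Qbar = G_isqrt ** Pbar ** G_isqrt"
definition Ht :: "real^'n^'n" where "Ht = G_isqrt ** transpose J ** H ** J ** G_isqrt"
definition M :: "real^'n^'n" where "M = matrix_inv G ** transpose J ** H ** J"

lemma inj_J: "inj ((*v) J)"
  using rank_J full_rank_injective by blast

lemma posdef_G: "posdef G"
  unfolding G_def by (rule gram_posdef[OF inj_J])

lemma posdef_G_sqrt: "posdef G_sqrt" and G_sqrt_square: "G_sqrt ** G_sqrt = G"
  unfolding G_sqrt_def using posdef_msqrt msqrt_square posdef_G by blast+

lemma G_isqrt_G_sqrt: "G_isqrt ** G_sqrt = mat 1" and G_sqrt_G_isqrt: "G_sqrt ** G_isqrt = mat 1"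
  unfolding G_isqrt_def using posdef_invertible[OF posdef_G_sqrt]
  by (simp_all add: matrix_inv_left matrix_inv_right)

lemma G_isqrt_G_sqrt_apply: "G_isqrt *v (G_sqrt *v x) = x"
  by (simp add: matrix_vector_mul_assoc G_isqrt_G_sqrt)

lemma sym_G_isqrt: "sym_mat G_isqrt"
  unfolding G_isqrt_def
  using posdef_G_sqrt posdef_invertible posdef_matrix_inv posdef_def by blast

lemma inj_G_isqrt: "inj ((*v) G_isqrt)"
  by (rule inj_on_inverseI[where g = "(*v) G_sqrt"])
    (simp add: matrix_vector_mul_assoc G_sqrt_G_isqrt)

lemma Ht_congruence: "Ht = transpose (J ** G_isqrt) ** H ** (J ** G_isqrt)"
  using sym_G_isqrt unfolding Ht_def sym_mat_def by (simp add: matrix_transpose_mul matrix_mul_assoc)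

lemma posdef_Ht: "posdef Ht"
  unfolding Ht_congruence
  by (rule posdef_congruence[OF posdef_H])
    (use inj_compose[OF inj_J inj_G_isqrt] in \<open>simp add: comp_def matrix_vector_mul_assoc\<close>)

lemma J_M: "J ** M = H ** J"
  using factor_through_injective[OF inj_J range_HJ] unfolding M_def G_def
  by (simp add: matrix_mul_assoc)

lemma G_sqrt_M: "G_sqrt ** M = Ht ** G_sqrt"
proof -
  have "G_sqrt = G_isqrt ** G"
    by (metis G_isqrt_G_sqrt G_sqrt_square matrix_mul_assoc matrix_mul_lid)
  then have "G_sqrt ** M = G_isqrt ** transpose J ** (J ** M)"
    unfolding G_def by (simp add: matrix_mul_assoc)
  also have "\<dots> = G_isqrt ** transpose J ** H ** J ** (G_isqrt ** G_sqrt)"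
    by (simp add: J_M G_isqrt_G_sqrt matrix_mul_assoc)
  finally show ?thesis
    unfolding Ht_def by (simp add: matrix_mul_assoc)
qed

lemma Ht_quadratic: "(G_sqrt *v e) \<bullet> (Ht *v (G_sqrt *v e)) = (J *v e) \<bullet> (H *v (J *v e))"
  unfolding Ht_congruence inner_congruence
  by (simp add: G_isqrt_G_sqrt_apply flip: matrix_vector_mul_assoc)

lemma sym_projP: "sym_mat (projP lam J S)"
  unfolding projP_def JS_rpinv_def by (rule rpinv_mul_sym[OF lam_nonneg])

lemma projP_contraction: "(projP lam J S *v y) \<bullet> (projP lam J S *v y) \<le> y \<bullet> (projP lam J S *v y)"
  unfolding projP_def JS_rpinv_def by (rule rpinv_mul_contraction[OF lam_nonneg])

lemma Pbar_apply: "Pbar *v y = ES k (\<lambda>S. projP lam J S *v y)"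
  unfolding Pbar_def by (rule ES_matrix_vector_mult)

lemma posdef_Pbar: "posdef Pbar"
proof (rule psd_invertible_imp_posdef)
  show "sym_mat Pbar"
    unfolding Pbar_def by (rule sym_mat_ES[OF sym_projP])
  show "0 \<le> x \<bullet> (Pbar *v x)" for x
    unfolding Pbar_apply inner_ES
    by (rule ES_nonneg) (rule order_trans[OF inner_ge_zero projP_contraction])
  show "invertible Pbar"
    unfolding Pbar_def by (rule invertible_Pbar)
qed

lemma G_sqrt_Pbar_commute: "G_sqrt ** Pbar = Pbar ** G_sqrt"
proof -
  obtain Bs where Bs: "span Bs = UNIV"
    "\<And>v. v \<in> Bs \<Longrightarrow> (\<exists>\<mu>. Pbar *v v = \<mu> *\<^sub>R v) \<and> (\<exists>\<mu>. G *v v = \<mu> *\<^sub>R v)"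
    using Pbar_share_eigenbasis unfolding share_eigenbasis_def Pbar_def G_def by blast
  show ?thesis
  proof (rule matrix_eq_on_spanning[OF Bs(1)])
    fix v assume "v \<in> Bs"
    then obtain p g where "Pbar *v v = p *\<^sub>R v" "G *v v = g *\<^sub>R v"
      using Bs(2) by blast
    moreover have "G_sqrt *v v = sqrt g *\<^sub>R v"
      unfolding G_sqrt_def by (rule msqrt_eigenvector[OF posdef_G \<open>G *v v = g *\<^sub>R v\<close>])
    ultimately show "(G_sqrt ** Pbar) *v v = (Pbar ** G_sqrt) *v v"
      by (simp add: matrix_vector_mul_assoc[symmetric] matrix_vector_mult_scaleR)
  qed
qed

lemma Qbar_congruence: "Qbar = transpose G_isqrt ** Pbar ** G_isqrt"
  using sym_G_isqrt unfolding Qbar_def sym_mat_def by simp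

lemma posdef_Qbar: "posdef Qbar"
  unfolding Qbar_congruence
  by (rule posdef_congruence[OF posdef_Pbar inj_G_isqrt])

lemma Qbar_inv: "matrix_inv Qbar = G_sqrt ** matrix_inv Pbar ** G_sqrt"
proof (rule matrix_inv_unique)
  have Pinv: "Pbar ** matrix_inv Pbar = mat 1"
    using matrix_inv_right posdef_invertible[OF posdef_Pbar] by blast
  have "Qbar ** (G_sqrt ** matrix_inv Pbar ** G_sqrt)
      = G_isqrt ** Pbar ** (G_isqrt ** G_sqrt) ** matrix_inv Pbar ** G_sqrt"
    unfolding Qbar_def by (simp add: matrix_mul_assoc)
  also have "\<dots> = G_isqrt ** (Pbar ** matrix_inv Pbar) ** G_sqrt"
    by (simp add: G_isqrt_G_sqrt matrix_mul_assoc)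
  finally show "Qbar ** (G_sqrt ** matrix_inv Pbar ** G_sqrt) = mat 1"
    by (simp add: Pinv G_isqrt_G_sqrt)
qed

lemma Qbar_inv_Pbar: "matrix_inv Qbar ** Pbar = G"
proof -
  have "matrix_inv Qbar ** Pbar = G_sqrt ** matrix_inv Pbar ** (G_sqrt ** Pbar)"
    unfolding Qbar_inv by (simp add: matrix_mul_assoc)
  also have "\<dots> = G_sqrt ** (matrix_inv Pbar ** Pbar) ** G_sqrt"
    unfolding G_sqrt_Pbar_commute by (simp add: matrix_mul_assoc)
  finally have "matrix_inv Qbar ** Pbar = G_sqrt ** (matrix_inv Pbar ** Pbar) ** G_sqrt" .
  then show ?thesis
    by (simp add: matrix_inv_left[OF posdef_invertible[OF posdef_Pbar]] G_sqrt_square)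
qed

definition X :: "real^'n^'n" where
  "X = ES k (\<lambda>S. G_isqrt ** projP lam J S ** matrix_inv Qbar ** projP lam J S ** G_isqrt)"

definition gamma :: real where "gamma = 1 / lambda_max X"

lemma X_congruence:
  "G_isqrt ** projP lam J S ** matrix_inv Qbar ** projP lam J S ** G_isqrt
    = transpose (projP lam J S ** G_isqrt) ** matrix_inv Qbar ** (projP lam J S ** G_isqrt)"
  using sym_G_isqrt sym_projP unfolding sym_mat_def by (simp add: matrix_transpose_mul matrix_mul_assoc)

lemma sym_X: "sym_mat X"
  unfolding X_def X_congruence
  using posdef_matrix_inv[OF posdef_Qbar] sym_mat_congruence posdef_def
  by (blast intro: sym_mat_ES)

lemma X_quadratic:
  "x \<bullet> (X *v x) = ES k (\<lambda>S. sqnorm_in (matrix_inv Qbar) (projP lam J S *v (G_isqrt *v x)))"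
  unfolding X_def X_congruence ES_matrix_vector_mult inner_ES inner_congruence sqnorm_in_def
  by (simp add: matrix_vector_mul_assoc)

lemma X_le_kappa_Qbar: "x \<bullet> (X *v x) \<le> kappa Qbar * (x \<bullet> x)"
proof -
  define y where "y = G_isqrt *v x"
  have qmin: "lambda_min Qbar > 0"
    by (rule posdef_lambda_min_pos[OF posdef_Qbar])
  have "x \<bullet> (X *v x) \<le> ES k (\<lambda>S. (y \<bullet> (projP lam J S *v y)) / lambda_min Qbar)"
    unfolding X_quadratic y_def[symmetric] sqnorm_in_def
  proof (rule ES_mono)
    fix S
    have "(projP lam J S *v y) \<bullet> (matrix_inv Qbar *v (projP lam J S *v y))
        \<le> ((projP lam J S *v y) \<bullet> (projP lam J S *v y)) / lambda_min Qbar"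
      by (rule posdef_matrix_inv_quadratic_le[OF posdef_Qbar])
    also have "\<dots> \<le> (y \<bullet> (projP lam J S *v y)) / lambda_min Qbar"
      using qmin projP_contraction by (simp add: divide_right_mono)
    finally show "(projP lam J S *v y) \<bullet> (matrix_inv Qbar *v (projP lam J S *v y))
        \<le> (y \<bullet> (projP lam J S *v y)) / lambda_min Qbar" .
  qed
  also have "\<dots> = (x \<bullet> (Qbar *v x)) / lambda_min Qbar"
    unfolding Qbar_congruence inner_congruence y_def
    by (simp add: ES_real sum_divide_distrib Pbar_apply inner_ES mult.commute)
  also have "\<dots> \<le> kappa Qbar * (x \<bullet> x)"
    using rayleigh_bounds(2)[OF posdef_def[THEN iffD1, OF posdef_Qbar, THEN conjunct1], of x] qmin
    unfolding kappa_def by (simp add: divide_right_mono)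
  finally show ?thesis .
qed

lemma lambda_max_X_pos: "lambda_max X > 0"
proof -
  obtain w :: "real^'n" where "w \<noteq> 0"
    using vector_choose_size[of 1] by (metis norm_zero zero_neq_one zero_le_one)
  then have "ES k (\<lambda>S. projP lam J S *v w) \<noteq> 0"
    unfolding Pbar_apply[symmetric] using inj_matrix_vector_mult[OF posdef_invertible[OF posdef_Pbar]]
    by (metis injD matrix_vector_mult_0_right)
  then obtain S where "S \<in> batches k" "projP lam J S *v w \<noteq> 0"
    using ES_nonzero by blast
  then have "0 < ES k (\<lambda>S. sqnorm_in (matrix_inv Qbar) (projP lam J S *v w))"
    using posdef_matrix_inv[OF posdef_Qbar]
    by (intro ES_pos) (auto simp: sqnorm_in_def posdef_nonneg posdef_def)
  also have "\<dots> = (G_sqrt *v w) \<bullet> (X *v (G_sqrt *v w))"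
    unfolding X_quadratic G_isqrt_G_sqrt_apply ..
  also have "\<dots> \<le> lambda_max X * ((G_sqrt *v w) \<bullet> (G_sqrt *v w))"
    by (rule rayleigh_bounds(2)[OF sym_X])
  finally show ?thesis
    by (metis inner_ge_zero mult_nonpos_nonneg not_le)
qed

lemma gamma_ge_inverse_kappa_Qbar: "gamma \<ge> 1 / kappa Qbar"
proof -
  have "lambda_max X \<le> kappa Qbar"
    by (rule lambda_max_le[OF sym_X X_le_kappa_Qbar])
  then show ?thesis
    unfolding gamma_def using lambda_max_X_pos by (simp add: frac_le)
qed

definition alpha :: real where "alpha = lambda_min Pbar"
definition eta :: real where "eta = gamma / lambda_max Ht"
definition rho :: real where "rho = 1 - (1 / kappa Ht) * alpha * gamma"

lemma expected_step_sqnorm: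
  fixes th :: "real^'n"
  assumes opt: "H *v (J *v thstar) + q = 0"
  defines "u \<equiv> G_sqrt *v (th - thstar)"
  shows "ES k (\<lambda>S. sqnorm_in (matrix_inv Qbar) (sngd_step s lam J H q S th - thstar))
    = sqnorm_in (matrix_inv Qbar) (th - thstar) - 2 * s * (u \<bullet> (Ht *v u))
      + s^2 * sqnorm_in X (Ht *v u)"
proof -
  define e where "e = th - thstar"
  have sym_Qi: "sym_mat (matrix_inv Qbar)"
    using posdef_matrix_inv[OF posdef_Qbar] posdef_def by blast
  have "matrix_inv Qbar *v (Pbar *v v) = transpose J *v (J *v v)" for v
    by (simp add: matrix_vector_mul_assoc Qbar_inv_Pbar G_def)
  then have "e \<bullet> (matrix_inv Qbar *v (Pbar *v (M *v e))) = e \<bullet> (transpose J *v (J *v (M *v e)))"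
    by simp
  also have "\<dots> = e \<bullet> (transpose J *v (H *v (J *v e)))"
    by (metis J_M matrix_vector_mul_assoc)
  also have "\<dots> = (J *v e) \<bullet> (H *v (J *v e))"
    by (subst inner_matrix_vector_transpose) (simp only: transpose_transpose)
  also have "\<dots> = u \<bullet> (Ht *v u)"
    unfolding u_def e_def Ht_quadratic ..
  finally have cross: "e \<bullet> (matrix_inv Qbar *v (Pbar *v (M *v e))) = u \<bullet> (Ht *v u)" .
  have "ES k (\<lambda>S. sqnorm_in (matrix_inv Qbar) (projP lam J S *v (M *v e)))
      = sqnorm_in X (G_sqrt *v (M *v e))"
    unfolding sqnorm_in_def[of X] X_quadratic G_isqrt_G_sqrt_apply ..
  also have "\<dots> = sqnorm_in X (Ht *v u)"
    unfolding u_def e_def by (simp add: matrix_vector_mul_assoc G_sqrt_M)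
  finally show ?thesis
    unfolding sngd_step_error[OF opt J_M] e_def[symmetric] ES_sqnorm_in_update[OF sym_Qi k_le]
      Pbar_def[symmetric] cross by simp
qed

lemma sqnorm_Qbar_inv_ge:
  "lambda_min Ht * alpha * sqnorm_in (matrix_inv Qbar) e \<le> (G_sqrt *v e) \<bullet> (Ht *v (G_sqrt *v e))"
proof -
  define u where "u = G_sqrt *v e"
  have "sqnorm_in (matrix_inv Qbar) e = u \<bullet> (matrix_inv Pbar *v u)"
    unfolding sqnorm_in_def Qbar_inv u_def
    using sym_mat_inner[OF posdef_def[THEN iffD1, OF posdef_G_sqrt, THEN conjunct1]]
    by (simp add: matrix_vector_mul_assoc[symmetric])
  also have "\<dots> \<le> (u \<bullet> u) / alpha"
    unfolding alpha_def by (rule posdef_matrix_inv_quadratic_le[OF posdef_Pbar])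
  finally have "alpha * sqnorm_in (matrix_inv Qbar) e \<le> u \<bullet> u"
    using posdef_lambda_min_pos[OF posdef_Pbar] unfolding alpha_def by (simp add: field_simps)
  then have "lambda_min Ht * (alpha * sqnorm_in (matrix_inv Qbar) e) \<le> lambda_min Ht * (u \<bullet> u)"
    using posdef_lambda_min_pos[OF posdef_Ht] by simp
  also have "\<dots> \<le> u \<bullet> (Ht *v u)"
    using rayleigh_bounds(1) posdef_Ht posdef_def by blast
  finally show ?thesis
    unfolding u_def by (simp add: mult.assoc)
qed

lemma sqnorm_X_Ht_le: "sqnorm_in X (Ht *v u) \<le> lambda_max X * lambda_max Ht * (u \<bullet> (Ht *v u))"
proof -
  have "sqnorm_in X (Ht *v u) \<le> lambda_max X * ((Ht *v u) \<bullet> (Ht *v u))"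
    unfolding sqnorm_in_def by (rule rayleigh_bounds(2)[OF sym_X])
  also have "\<dots> \<le> lambda_max X * (lambda_max Ht * (u \<bullet> (Ht *v u)))"
    using posdef_norm_square_bounds(2)[OF posdef_Ht] lambda_max_X_pos by simp
  finally show ?thesis by (simp add: mult.assoc)
qed

lemma one_step_contraction:
  assumes opt: "H *v (J *v thstar) + q = 0"
  shows "ES k (\<lambda>S. sqnorm_in (matrix_inv Qbar) (sngd_step eta lam J H q S th - thstar))
    \<le> rho * sqnorm_in (matrix_inv Qbar) (th - thstar)"
proof -
  define u where "u = G_sqrt *v (th - thstar)"
  define V where "V = sqnorm_in (matrix_inv Qbar) (th - thstar)"
  have hmax: "lambda_max Ht > 0"
    using posdef_lambda_min_pos[OF posdef_Ht] lambda_min_le_lambda_max posdef_Ht posdef_def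
    by (metis less_le_trans)
  have eta: "eta > 0" "eta * lambda_max X * lambda_max Ht = 1"
    unfolding eta_def gamma_def using hmax lambda_max_X_pos by auto
  have "eta^2 * sqnorm_in X (Ht *v u) \<le> eta^2 * (lambda_max X * lambda_max Ht * (u \<bullet> (Ht *v u)))"
    using sqnorm_X_Ht_le by (simp add: mult_left_mono)
  also have "\<dots> = eta * (u \<bullet> (Ht *v u))"
    using eta(2) by (simp add: power2_eq_square algebra_simps)
  finally have "ES k (\<lambda>S. sqnorm_in (matrix_inv Qbar) (sngd_step eta lam J H q S th - thstar))
      \<le> V - eta * (u \<bullet> (Ht *v u))"
    unfolding expected_step_sqnorm[OF opt] u_def[symmetric] V_def by simp
  also have "\<dots> \<le> V - eta * (lambda_min Ht * alpha * V)"
    using sqnorm_Qbar_inv_ge[of "th - thstar"] eta(1) unfolding u_def V_def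
    by (simp add: mult_left_mono)
  also have "\<dots> = rho * V"
    unfolding rho_def eta_def kappa_def by (simp add: algebra_simps)
  finally show ?thesis unfolding V_def .
qed

text \<open>The contraction for the homogeneous problem (q = 0, with minimiser 0), evaluated at
  any nonzero point, forces the rate to be nonnegative.\<close>

lemma rho_nonneg: "0 \<le> rho"
proof -
  obtain w :: "real^'n" where "w \<noteq> 0"
    using vector_choose_size[of 1] by (metis norm_zero zero_neq_one zero_le_one)
  then have "0 < sqnorm_in (matrix_inv Qbar) w"
    using posdef_matrix_inv[OF posdef_Qbar] unfolding sqnorm_in_def posdef_def by blast
  moreover have "0 \<le> ES k (\<lambda>S. sqnorm_in (matrix_inv Qbar) (sngd_step eta lam J H 0 S w - 0))"
    using posdef_matrix_inv[OF posdef_Qbar] by (intro ES_nonneg) (simp add: sqnorm_in_def posdef_nonneg)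
  ultimately have "0 \<le> rho * sqnorm_in (matrix_inv Qbar) w"
    using one_step_contraction[of 0 0 w] by simp
  then show ?thesis
    using \<open>0 < sqnorm_in (matrix_inv Qbar) w\<close> by (simp add: zero_le_mult_iff)
qed

theorem expected_error_bound:
  assumes "H *v (J *v thstar) + q = 0"
  shows "E_seq k t (\<lambda>Ss. sqnorm_in (matrix_inv Qbar) (sngd_iter eta lam J H q Ss th0 - thstar))
    \<le> rho ^ t * sqnorm_in (matrix_inv Qbar) (th0 - thstar)"
  unfolding sngd_iter_fold
  by (rule E_seq_fold_le[OF one_step_contraction[OF assms] rho_nonneg])

end

theorem theorem2:
  fixes J :: "real^'n::finite^'m::finite" and H :: "real^'m^'m" and q :: "real^'m"
    and c :: real and lam :: real and k :: nat and thstar :: "real^'n"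
  assumes rankJ: "rank J = CARD('n)"
    and Hpd: "posdef H"
    and cons1: "\<forall>v. quadloss H q c (J *v thstar) \<le> quadloss H q c v"
    and cons2: "range ((*v) (H ** J)) \<subseteq> range ((*v) J)"
    and k: "1 \<le> k" "k \<le> CARD('m)"
    and lam: "lam \<ge> 0"
    and Pbar_ns: "invertible (ES k (projP lam J) :: real^'n^'n)"
    and Pbar_eig: "share_eigenbasis (ES k (projP lam J)) (transpose J ** J)"
  shows "let Pbar = ES k (projP lam J) :: real^'n^'n;
             alpha = lambda_min Pbar;
             R = matrix_inv (msqrt (transpose J ** J));
             Qbar = R ** Pbar ** R;
             Ht = R ** transpose J ** H ** J ** R;
             gamma = 1 / lambda_max (ES k (\<lambda>S. R ** projP lam J S ** matrix_inv Qbar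
                                                  ** projP lam J S ** R) :: real^'n^'n);
             eta = gamma / lambda_max Ht
         in gamma \<ge> 1 / kappa Qbar \<and>
            (\<forall>(th0::real^'n) (t::nat).
               E_seq k t (\<lambda>Ss. sqnorm_in (matrix_inv Qbar)
                                  (sngd_iter eta lam J H q Ss th0 - thstar))
               \<le> (1 - (1 / kappa Ht) * alpha * gamma) ^ t
                  * sqnorm_in (matrix_inv Qbar) (th0 - thstar))"
proof -
  interpret sngd_setting J H lam k
    using rankJ Hpd cons2 k(2) lam Pbar_ns Pbar_eig by unfold_locales
  have "H *v (J *v thstar) + q = 0"
    using quadloss_minimizer Hpd cons1 unfolding posdef_def by blast
  then show ?thesis
    using gamma_ge_inverse_kappa_Qbar expected_error_bound
    unfolding Let_def rho_def eta_def alpha_def gamma_def X_def Qbar_def Ht_def Pbar_def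
      G_isqrt_def G_sqrt_def G_def
    by blast
qed

end
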